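(* Let $G$ be a finite connected weighted graph with $N$ vertices and let $0=\lambda_0<\lambda_1\le\cdots\le\lambda_{N-1}$ be the eigenvalues (with multiplicity) of its weighted Laplacian $L_w$. Let $0\le k\le N-1$. Then for every $S_0\subset V(G)$ with $|S_0|\le k$ and every partition $\mathcal{S}=(S_m)_{m=0,\ldots,n}$ of $V(G)$ with initial set $S_0$ and $K_m(\mathcal{S})>0$ for $m=0,\ldots,n-1$, \[ \lambda_k\ge\left(2\delta_{\mathcal{S},2}^2\right)^{-1}; \] equivalently, $\lambda_k\ge\max_{\mathcal{S}}(2\delta_{\mathcal{S},2}^2)^{-1}$, the maximum over all such partitions whose initial set has at most $k$ elements.
   Context: $G$ has vertex set $V(G)$ and symmetric weights $w\ge0$ with $w(u,u)=0$; connected with respect to edges $\{w(u,v)>0\}$. $(L_wf)(v)=\sum_u(f(v)-f(u))w(v,u)$ on $\ell^2(G)$ (vertex weight $\nu\equiv1$). $w_A(v)=\sum_{u\in A}w(u,v)$; $D_m=\sup_{v\in S_m}w_{S_{m+1}}(v)$, $K_m=\inf_{v\in S_{m+1}}w_{S_m}(v)$; $\delta_{\mathcal{S},2}=\left(\sum_{m=1}^n\sum_{j=1}^m\frac{1}{K_{j-1}}\prod_{i=j}^{m-1}\frac{D_i}{K_i}\right)^{1/2}$ (empty products $=1$, empty sums $=0$). *)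

theory Defs
  imports "Jordan_Normal_Form.Char_Poly"
begin

text \<open>Vertices are 0,...,N-1; w :: nat => nat => real is the edge weight.\<close>

definition weighted_graph :: "nat \<Rightarrow> (nat \<Rightarrow> nat \<Rightarrow> real) \<Rightarrow> bool" where
  "weighted_graph N w \<longleftrightarrow>
     (\<forall>u<N. \<forall>v<N. w u v \<ge> 0 \<and> w u v = w v u) \<and> (\<forall>u<N. w u u = 0)"

definition connected_wg :: "nat \<Rightarrow> (nat \<Rightarrow> nat \<Rightarrow> real) \<Rightarrow> bool" where
  "connected_wg N w \<longleftrightarrow>
     (\<forall>u<N. \<forall>v<N. (\<lambda>x y. x < N \<and> y < N \<and> w x y > 0)\<^sup>*\<^sup>* u v)"

text \<open>Matrix of the weighted Laplacian (vertex weight 1):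
  (L f)(v) = sum_u (f v - f u) w(v,u).\<close>
definition laplacian :: "nat \<Rightarrow> (nat \<Rightarrow> nat \<Rightarrow> real) \<Rightarrow> real mat" where
  "laplacian N w = mat N N (\<lambda>(v, u).
      (if v = u then (\<Sum>x<N. w v x) else 0) - w v u)"

definition wA :: "(nat \<Rightarrow> nat \<Rightarrow> real) \<Rightarrow> nat set \<Rightarrow> nat \<Rightarrow> real" where
  "wA w A v = (\<Sum>u\<in>A. w u v)"

definition Dm :: "(nat \<Rightarrow> nat \<Rightarrow> real) \<Rightarrow> (nat \<Rightarrow> nat set) \<Rightarrow> nat \<Rightarrow> real" where
  "Dm w S m = Sup (wA w (S (Suc m)) ` S m)"

definition Km :: "(nat \<Rightarrow> nat \<Rightarrow> real) \<Rightarrow> (nat \<Rightarrow> nat set) \<Rightarrow> nat \<Rightarrow> real" where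
  "Km w S m = Inf (wA w (S m) ` S (Suc m))"

definition delta2 :: "(nat \<Rightarrow> nat \<Rightarrow> real) \<Rightarrow> (nat \<Rightarrow> nat set) \<Rightarrow> nat \<Rightarrow> real" where
  "delta2 w S n = sqrt (\<Sum>m=1..n. \<Sum>j=1..m.
      (1 / Km w S (j - 1)) * (\<Prod>i=j..<m. Dm w S i / Km w S i))"

definition is_partition :: "nat \<Rightarrow> (nat \<Rightarrow> nat set) \<Rightarrow> nat \<Rightarrow> bool" where
  "is_partition N S n \<longleftrightarrow>
     (\<Union>m\<le>n. S m) = {0..<N} \<and>
     (\<forall>m\<le>n. \<forall>m'\<le>n. m \<noteq> m' \<longrightarrow> S m \<inter> S m' = {}) \<and>
     (\<forall>m. 1 \<le> m \<and> m \<le> n \<longrightarrow> S m \<noteq> {})"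

end

theory Submission
  imports Defs "Jordan_Normal_Form.Schur_Decomposition"
begin

text \<open>Courant--Fischer in its simplest form: the spectrum of the symmetric matrix \<open>L\<^sub>w\<close> yields
  orthogonal eigenvectors for \<open>\<lambda>\<^sub>0, \<dots>, \<lambda>\<^sub>k\<close>, and among their combinations there is an
  \<open>f \<noteq> 0\<close> vanishing on the \<open>\<le> k\<close> vertices of \<open>S\<^sub>0\<close>; its Rayleigh quotient is at most \<open>\<lambda>\<^sub>k\<close>.
  A discrete Hardy inequality bounds \<open>\<parallel>f\<parallel>\<^sup>2\<close> for such \<open>f\<close> by \<open>2 \<delta>\<^sup>2\<close> times the energy of the
  edges between consecutive layers \<open>S\<^sub>m, S\<^sub>m\<^sub>+\<^sub>1\<close>: going outward layer by layer, \<open>f x\<close> on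
  \<open>S\<^sub>m\<^sub>+\<^sub>1\<close> is the mean of \<open>f\<close> over the neighbours in \<open>S\<^sub>m\<close> plus a difference term,
  the mean is controlled by induction (the weights grow by at most \<open>D\<^sub>m / K\<^sub>m\<close> per layer) and the
  difference term by the edge energy. That energy is at most \<open>\<langle>f, L\<^sub>w f\<rangle>\<close>, hence
  \<open>\<parallel>f\<parallel>\<^sup>2 \<le> 2 \<delta>\<^sup>2 \<lambda>\<^sub>k \<parallel>f\<parallel>\<^sup>2\<close>.\<close>

text \<open>Vectors in \<open>\<real>\<^sup>N\<close> are functions \<open>nat \<Rightarrow> real\<close> of which only the values below \<open>N\<close> matter.\<close>

definition dot :: "nat \<Rightarrow> (nat \<Rightarrow> real) \<Rightarrow> (nat \<Rightarrow> real) \<Rightarrow> real" where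
  "dot N g h = (\<Sum>x<N. g x * h x)"

definition mat_app :: "nat \<Rightarrow> real mat \<Rightarrow> (nat \<Rightarrow> real) \<Rightarrow> nat \<Rightarrow> real" where
  "mat_app N A g x = (\<Sum>y<N. A $$ (x, y) * g y)"

definition independent_upto :: "nat \<Rightarrow> (nat \<Rightarrow> nat \<Rightarrow> real) \<Rightarrow> bool" where
  "independent_upto N p \<longleftrightarrow> (\<forall>a. (\<forall>x<N. (\<Sum>j<N. a j * p j x) = 0) \<longrightarrow> (\<forall>j<N. a j = 0))"

definition in_span :: "nat \<Rightarrow> (nat \<Rightarrow> nat \<Rightarrow> real) \<Rightarrow> nat \<Rightarrow> (nat \<Rightarrow> real) \<Rightarrow> bool" where
  "in_span N p k g \<longleftrightarrow> (\<exists>d. \<forall>x<N. g x = (\<Sum>l<k. d l * p l x))"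

lemma dot_commute: "dot N g h = dot N h g"
  by (simp add: dot_def mult.commute)

lemma dot_self_nonneg: "dot N g g \<ge> 0"
  unfolding dot_def by (intro sum_nonneg) simp

lemma dot_self_eq_0D:
  assumes "dot N g g = 0" and "x < N" shows "g x = 0"
proof -
  have "\<forall>y\<in>{..<N}. g y * g y = 0"
    using assms(1) unfolding dot_def by (subst sum_nonneg_eq_0_iff[symmetric]) auto
  thus ?thesis using assms(2) by auto
qed

lemma dot_cong:
  "(\<And>x. x < N \<Longrightarrow> g x = g' x) \<Longrightarrow> (\<And>x. x < N \<Longrightarrow> h x = h' x) \<Longrightarrow> dot N g h = dot N g' h'"
  unfolding dot_def by (intro sum.cong) auto

lemma dot_sum_left: "dot N (\<lambda>x. \<Sum>i\<in>I. c i * q i x) h = (\<Sum>i\<in>I. c i * dot N (q i) h)"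
proof -
  have "dot N (\<lambda>x. \<Sum>i\<in>I. c i * q i x) h = (\<Sum>x<N. \<Sum>i\<in>I. c i * (q i x * h x))"
    unfolding dot_def by (simp add: sum_distrib_right mult.assoc)
  also have "\<dots> = (\<Sum>i\<in>I. \<Sum>x<N. c i * (q i x * h x))" by (rule sum.swap)
  finally show ?thesis unfolding dot_def by (simp add: sum_distrib_left)
qed

lemma dot_diff_left: "dot N (\<lambda>x. g x - g' x) h = dot N g h - dot N g' h"
  unfolding dot_def by (simp add: left_diff_distrib sum_subtractf)

lemma dot_scale_left: "dot N (\<lambda>x. a * g x) h = a * dot N g h"
  unfolding dot_def by (simp add: sum_distrib_left mult.assoc)

lemma mat_app_sum:
  "mat_app N A (\<lambda>x. \<Sum>i\<in>I. c i * q i x) x = (\<Sum>i\<in>I. c i * mat_app N A (q i) x)"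
proof -
  have "mat_app N A (\<lambda>x. \<Sum>i\<in>I. c i * q i x) x = (\<Sum>y<N. \<Sum>i\<in>I. c i * (A $$ (x, y) * q i y))"
    unfolding mat_app_def by (simp add: sum_distrib_left mult.left_commute)
  also have "\<dots> = (\<Sum>i\<in>I. \<Sum>y<N. c i * (A $$ (x, y) * q i y))" by (rule sum.swap)
  finally show ?thesis unfolding mat_app_def by (simp add: sum_distrib_left)
qed

lemma mat_app_diff: "mat_app N A (\<lambda>x. g x - g' x) x = mat_app N A g x - mat_app N A g' x"
  unfolding mat_app_def by (simp add: right_diff_distrib sum_subtractf)

lemma dot_mat_app_symmetric:
  assumes "\<forall>x<N. \<forall>y<N. A $$ (x, y) = A $$ (y, x)"
  shows "dot N (mat_app N A g) h = dot N g (mat_app N A h)"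
proof -
  have "dot N (mat_app N A g) h = (\<Sum>x<N. \<Sum>y<N. A $$ (x, y) * g y * h x)"
    by (simp add: dot_def mat_app_def sum_distrib_right)
  also have "\<dots> = (\<Sum>y<N. \<Sum>x<N. A $$ (x, y) * g y * h x)" by (rule sum.swap)
  also have "\<dots> = (\<Sum>y<N. g y * (\<Sum>x<N. A $$ (y, x) * h x))"
    unfolding sum_distrib_left using assms by (intro sum.cong refl) simp
  finally show ?thesis by (simp add: dot_def mat_app_def)
qed

lemma in_span_basis:
  assumes "l < k" shows "in_span N p k (p l)"
  unfolding in_span_def
  by (rule exI[of _ "\<lambda>i. of_bool (i = l)"]) (simp add: assms)

lemma in_span_lin_comb:
  assumes "in_span N p k g" and "in_span N p k h"
  shows "in_span N p k (\<lambda>x. a * g x + b * h x)"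
proof -
  obtain d e where d: "\<forall>x<N. g x = (\<Sum>l<k. d l * p l x)" and e: "\<forall>x<N. h x = (\<Sum>l<k. e l * p l x)"
    using assms unfolding in_span_def by blast
  show ?thesis unfolding in_span_def
    by (rule exI[of _ "\<lambda>l. a * d l + b * e l"])
      (simp add: d e sum.distrib sum_distrib_left distrib_right mult.assoc)
qed

lemma in_span_sum:
  assumes "finite I" and "\<forall>i\<in>I. in_span N p k (g i)"
  shows "in_span N p k (\<lambda>x. \<Sum>i\<in>I. c i * g i x)"
  using assms
proof (induction I rule: finite_induct)
  case empty
  show ?case unfolding in_span_def by (rule exI[of _ "\<lambda>_. 0"]) simp
next
  case (insert i I)
  have "in_span N p k (\<lambda>x. c i * g i x + 1 * (\<Sum>i\<in>I. c i * g i x))"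
    using insert by (intro in_span_lin_comb) auto
  thus ?case using insert by simp
qed

lemma in_span_mono:
  assumes "in_span N p k g" and "k \<le> k'" shows "in_span N p k' g"
proof -
  obtain d where d: "\<forall>x<N. g x = (\<Sum>l<k. d l * p l x)" using assms unfolding in_span_def by blast
  have "(\<Sum>l<k'. (if l < k then d l else 0) * p l x) = (\<Sum>l<k. d l * p l x)" for x
    using assms(2) by (intro sum.mono_neutral_cong_right) auto
  thus ?thesis unfolding in_span_def using d
    by (intro exI[of _ "\<lambda>l. if l < k then d l else 0"]) simp
qed

lemma in_span_cong:
  assumes "in_span N p k g" and "\<forall>l<k. p l = p' l" and "\<forall>x<N. g x = g' x"
  shows "in_span N p' k g'"
proof -
  obtain d where "\<forall>x<N. g x = (\<Sum>l<k. d l * p l x)" using assms(1) unfolding in_span_def by blast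
  moreover have "(\<Sum>l<k. d l * p l x) = (\<Sum>l<k. d l * p' l x)" for x
    using assms(2) by (intro sum.cong) auto
  ultimately show ?thesis unfolding in_span_def using assms(3) by (intro exI[of _ d]) auto
qed

lemma dot_sum_orthogonal:
  fixes q :: "nat \<Rightarrow> nat \<Rightarrow> real"
  assumes orth: "\<forall>j<m. \<forall>i<j. dot N (q i) (q j) = 0" and i: "i < m"
  shows "(\<Sum>i'<m. d i' * dot N (q i') (q i)) = d i * dot N (q i) (q i)"
proof -
  have "dot N (q i') (q i) = 0" if "i' < m" "i' \<noteq> i" for i'
  proof (cases "i' < i")
    case True
    thus ?thesis using orth i by blast
  next
    case False
    hence "i < i'" using that by linarith
    hence "dot N (q i) (q i') = 0" using orth that by blast
    thus ?thesis by (simp add: dot_commute)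
  qed
  hence "(\<Sum>i'<m. d i' * dot N (q i') (q i)) = (\<Sum>i'<m. if i' = i then d i * dot N (q i) (q i) else 0)"
    by (intro sum.cong) auto
  thus ?thesis using i by simp
qed

lemma in_span_orthogonal_eq_0:
  fixes q :: "nat \<Rightarrow> nat \<Rightarrow> real"
  assumes orth: "\<forall>j<m. \<forall>i<j. dot N (q i) (q j) = 0" and pos: "\<forall>i<m. dot N (q i) (q i) > 0"
    and g: "in_span N q m g" and perp: "\<forall>i<m. dot N g (q i) = 0" and x: "x < N"
  shows "g x = 0"
proof -
  obtain d where d: "\<forall>x<N. g x = (\<Sum>i<m. d i * q i x)" using g unfolding in_span_def by blast
  have "d i = 0" if i: "i < m" for i
  proof -
    have "0 = dot N g (q i)" using perp i by simp
    also have "\<dots> = dot N (\<lambda>x. \<Sum>i<m. d i * q i x) (q i)"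
      using d by (intro dot_cong) auto
    also have "\<dots> = d i * dot N (q i) (q i)"
      by (simp add: dot_sum_left dot_sum_orthogonal[OF orth i])
    finally show ?thesis using pos i by (metis less_irrefl mult_eq_0_iff)
  qed
  thus ?thesis using d x by simp
qed

lemma dot_self_pos_of_triangular:
  assumes indep: "independent_upto N p"
    and j: "j < N" and g: "in_span N p j (\<lambda>x. g x - p j x)"
  shows "dot N g g > 0"
proof (rule ccontr)
  assume "\<not> dot N g g > 0"
  hence g0: "dot N g g = 0" using dot_self_nonneg[of N g] by linarith
  obtain d where d: "\<forall>x<N. g x - p j x = (\<Sum>l<j. d l * p l x)" using g unfolding in_span_def by blast
  define a where "a = (\<lambda>l. if l < j then d l else if l = j then 1 else 0 :: real)"
  have "(\<Sum>l<N. a l * p l x) = 0" if x: "x < N" for x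
  proof -
    have "(\<Sum>l<N. a l * p l x) = (\<Sum>l<Suc j. a l * p l x)"
      using j by (intro sum.mono_neutral_right) (auto simp: a_def)
    also have "\<dots> = (\<Sum>l<j. d l * p l x) + p j x"
      by (simp add: a_def)
    also have "\<dots> = g x" using d x by (metis diff_add_cancel)
    finally show ?thesis using dot_self_eq_0D[OF g0 x] by simp
  qed
  hence "a j = 0" using indep j unfolding independent_upto_def by blast
  thus False by (simp add: a_def)
qed

lemma columns_independent_of_left_inverse:
  fixes P Q :: "real mat"
  assumes P: "P \<in> carrier_mat N N" and Q: "Q \<in> carrier_mat N N" and QP: "Q * P = 1\<^sub>m N"
  shows "independent_upto N (\<lambda>j x. P $$ (x, j))"
  unfolding independent_upto_def
proof (intro allI impI)
  fix a i assume a: "\<forall>x<N. (\<Sum>j<N. a j * P $$ (x, j)) = 0" and i: "i < N"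
  have "0 = (\<Sum>x<N. Q $$ (i, x) * (\<Sum>j<N. a j * P $$ (x, j)))" using a by simp
  also have "\<dots> = (\<Sum>x<N. \<Sum>j<N. a j * (Q $$ (i, x) * P $$ (x, j)))"
    by (simp add: sum_distrib_left mult.left_commute)
  also have "\<dots> = (\<Sum>j<N. a j * (\<Sum>x<N. Q $$ (i, x) * P $$ (x, j)))"
    by (subst sum.swap) (simp add: sum_distrib_left)
  also have "\<dots> = (\<Sum>j<N. a j * (Q * P) $$ (i, j))"
    using Q P i by (intro sum.cong) (simp_all add: scalar_prod_def atLeast0LessThan)
  also have "\<dots> = (\<Sum>j<N. if j = i then a j else 0)"
    using QP i by (intro sum.cong) auto
  also have "\<dots> = a i" using i by simp
  finally show "a i = 0" by simp
qed

lemma schur_triangular_basis: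
  fixes A :: "real mat"
  assumes A: "A \<in> carrier_mat N N" and cp: "char_poly A = (\<Prod>e\<leftarrow>lam. [:- e, 1:])"
  obtains p T where "\<forall>j<N. \<forall>x<N. mat_app N A (p j) x = (\<Sum>l\<le>j. T l j * p l x)"
    and "\<forall>j<N. T j j = lam ! j"
    and "independent_upto N p"
proof -
  obtain B P Q where sd: "schur_decomposition A lam = (B, P, Q)"
    by (cases "schur_decomposition A lam") auto
  from schur_decomposition[OF A cp sd] have sim: "similar_mat_wit A B P Q"
    and ut: "upper_triangular B" and dg: "diag_mat B = lam" by auto
  from sim A have B: "B \<in> carrier_mat N N" and P: "P \<in> carrier_mat N N" and Q: "Q \<in> carrier_mat N N"
    and QP: "Q * P = 1\<^sub>m N" and AE: "A = P * B * Q"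
    unfolding similar_mat_wit_def Let_def by auto
  have AP: "A * P = P * B"
  proof -
    have "A * P = P * B * (Q * P)"
      using AE by (simp add: assoc_mult_mat[OF mult_carrier_mat[OF P B] Q P])
    thus ?thesis using QP P B by simp
  qed
  define p where "p = (\<lambda>j x. P $$ (x, j))"
  define T where "T = (\<lambda>l j. B $$ (l, j))"
  show ?thesis
  proof
    show "\<forall>j<N. \<forall>x<N. mat_app N A (p j) x = (\<Sum>l\<le>j. T l j * p l x)"
    proof (intro allI impI)
      fix j x assume j: "j < N" and x: "x < N"
      have "mat_app N A (p j) x = (A * P) $$ (x, j)"
        using A P j x by (simp add: scalar_prod_def atLeast0LessThan p_def mat_app_def)
      also have "\<dots> = (\<Sum>l<N. T l j * p l x)"
        using AP B P j x by (simp add: scalar_prod_def atLeast0LessThan p_def T_def mult.commute)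
      also have "\<dots> = (\<Sum>l\<le>j. T l j * p l x)"
        using ut B j by (intro sum.mono_neutral_right) (auto simp: upper_triangular_def T_def)
      finally show "mat_app N A (p j) x = (\<Sum>l\<le>j. T l j * p l x)" .
    qed
    show "\<forall>j<N. T j j = lam ! j"
      using dg B by (auto simp: diag_mat_def T_def)
    show "independent_upto N p"
      unfolding p_def by (rule columns_independent_of_left_inverse[OF P Q QP])
  qed
qed

text \<open>For a real symmetric matrix the columns of a Schur triangularisation, orthogonalised by
  Gram--Schmidt, are eigenvectors.\<close>

lemma gram_schmidt_step_eigenvector:
  fixes A :: "real mat" and p q :: "nat \<Rightarrow> nat \<Rightarrow> real" and lam :: "nat \<Rightarrow> real"
  assumes sym: "\<forall>x<N. \<forall>y<N. A $$ (x, y) = A $$ (y, x)"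
    and tri: "\<forall>x<N. mat_app N A (p m) x = (\<Sum>l\<le>m. T l m * p l x)" and diag: "T m m = lam m"
    and orth: "\<forall>j<m. \<forall>i<j. dot N (q i) (q j) = 0" and pos: "\<forall>i<m. dot N (q i) (q i) > 0"
    and eig: "\<forall>j<m. \<forall>x<N. mat_app N A (q j) x = lam j * q j x"
    and span: "\<forall>l<m. in_span N q m (p l)"
    and r: "r = (\<lambda>x. p m x - (\<Sum>i<m. c i * q i x))"
    and perp: "\<forall>i<m. dot N (q i) r = 0"
    and x: "x < N"
  shows "mat_app N A r x = lam m * r x"
proof -
  define e where "e = (\<lambda>x. mat_app N A r x - lam m * r x)"
  have e_expand: "e x = 1 * (\<Sum>l<m. T l m * p l x) + 1 * (\<Sum>i<m. (c i * (lam m - lam i)) * q i x)"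
    if x: "x < N" for x
  proof -
    have "mat_app N A (p m) x = (\<Sum>l<m. T l m * p l x) + lam m * p m x"
      using tri x diag by (simp add: lessThan_Suc_atMost[symmetric])
    moreover have "(\<Sum>i<m. c i * mat_app N A (q i) x) = (\<Sum>i<m. c i * (lam i * q i x))"
      using eig x by (intro sum.cong) auto
    moreover have "(\<Sum>i<m. (c i * (lam m - lam i)) * q i x)
        = lam m * (\<Sum>i<m. c i * q i x) - (\<Sum>i<m. c i * (lam i * q i x))"
      by (simp add: sum_distrib_left sum_subtractf[symmetric] algebra_simps)
    ultimately show ?thesis
      by (simp add: e_def r mat_app_diff mat_app_sum algebra_simps)
  qed
  have "in_span N q m (\<lambda>x. 1 * (\<Sum>l<m. T l m * p l x) + 1 * (\<Sum>i<m. (c i * (lam m - lam i)) * q i x))"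
    using span by (intro in_span_lin_comb in_span_sum) (auto intro: in_span_basis)
  hence "in_span N q m e"
    by (rule in_span_cong) (use e_expand in auto)
  moreover have "\<forall>i<m. dot N e (q i) = 0"
  proof (intro allI impI)
    fix i assume i: "i < m"
    have "dot N e (q i) = dot N r (mat_app N A (q i)) - lam m * dot N r (q i)"
      unfolding e_def by (simp add: dot_diff_left dot_scale_left dot_mat_app_symmetric[OF sym])
    also have "dot N r (mat_app N A (q i)) = lam i * dot N r (q i)"
      using eig i by (simp add: dot_commute[of N r] dot_cong[of N _ "\<lambda>x. lam i * q i x"] dot_scale_left)
    finally show "dot N e (q i) = 0" using perp i by (simp add: dot_commute)
  qed
  ultimately have "e x = 0" using in_span_orthogonal_eq_0[OF orth pos] x by blast
  thus ?thesis by (simp add: e_def)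
qed

lemma gram_schmidt_step_span:
  fixes p q :: "nat \<Rightarrow> nat \<Rightarrow> real"
  assumes orth: "\<forall>j<m. \<forall>i<j. dot N (q i) (q j) = 0" and pos: "\<forall>i<m. dot N (q i) (q i) > 0"
    and q_p: "\<forall>i<m. in_span N p i (\<lambda>x. q i x - p i x)"
    and c: "c = (\<lambda>i. dot N (p m) (q i) / dot N (q i) (q i))"
    and r: "r = (\<lambda>x. p m x - (\<Sum>i<m. c i * q i x))"
  shows "\<forall>i<m. dot N (q i) r = 0" and "in_span N p m (\<lambda>x. r x - p m x)"
    and "in_span N (q(m := r)) (Suc m) (p m)"
proof -
  show "\<forall>i<m. dot N (q i) r = 0"
  proof (intro allI impI)
    fix i assume i: "i < m"
    have "dot N r (q i) = dot N (p m) (q i) - c i * dot N (q i) (q i)"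
      by (simp add: r dot_diff_left dot_sum_left dot_sum_orthogonal[OF orth i])
    moreover have "dot N (q i) (q i) \<noteq> 0" using pos i by (metis less_irrefl)
    ultimately show "dot N (q i) r = 0" by (simp add: c dot_commute)
  qed
  have q_span: "in_span N p m (q i)" if i: "i < m" for i
  proof -
    have "in_span N p m (\<lambda>x. 1 * p i x + 1 * (q i x - p i x))"
      using q_p i by (intro in_span_lin_comb in_span_basis) (auto intro: in_span_mono)
    thus ?thesis by (rule in_span_cong) auto
  qed
  have "in_span N p m (\<lambda>x. \<Sum>i<m. (- c i) * q i x)"
    using q_span by (intro in_span_sum) auto
  thus "in_span N p m (\<lambda>x. r x - p m x)"
    by (rule in_span_cong) (auto simp: r sum_negf)
  have "in_span N (q(m := r)) (Suc m) (\<lambda>x. 1 * (q(m := r)) m x + 1 * (\<Sum>i<m. c i * (q(m := r)) i x))"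
  proof (intro in_span_lin_comb in_span_sum ballI)
    fix i assume "i \<in> {..<m}"
    thus "in_span N (q(m := r)) (Suc m) ((q(m := r)) i)" by (intro in_span_basis) simp
  qed (use in_span_basis[of m "Suc m" N "q(m := r)"] in simp_all)
  thus "in_span N (q(m := r)) (Suc m) (p m)"
    by (rule in_span_cong) (auto simp: r)
qed

lemma gram_schmidt_eigenvectors:
  fixes A :: "real mat" and p T :: "nat \<Rightarrow> nat \<Rightarrow> real" and lam :: "nat \<Rightarrow> real"
  assumes sym: "\<forall>x<N. \<forall>y<N. A $$ (x, y) = A $$ (y, x)"
    and tri: "\<forall>j<N. \<forall>x<N. mat_app N A (p j) x = (\<Sum>l\<le>j. T l j * p l x)"
    and diag: "\<forall>j<N. T j j = lam j"
    and indep: "independent_upto N p"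
  shows "m \<le> N \<Longrightarrow> \<exists>q. \<forall>j<m. in_span N p j (\<lambda>x. q j x - p j x) \<and> in_span N q (Suc j) (p j)
     \<and> (\<forall>x<N. mat_app N A (q j) x = lam j * q j x) \<and> (\<forall>i<j. dot N (q i) (q j) = 0)"
proof (induction m)
  case 0
  show ?case by simp
next
  case (Suc m)
  then obtain q where IH: "\<forall>j<m. in_span N p j (\<lambda>x. q j x - p j x) \<and> in_span N q (Suc j) (p j)
     \<and> (\<forall>x<N. mat_app N A (q j) x = lam j * q j x) \<and> (\<forall>i<j. dot N (q i) (q j) = 0)"
    by auto
  have m: "m < N" using Suc.prems by simp
  have orth: "\<forall>j<m. \<forall>i<j. dot N (q i) (q j) = 0" using IH by blast
  have pos: "\<forall>j<m. dot N (q j) (q j) > 0"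
  proof (intro allI impI)
    fix j assume "j < m"
    thus "dot N (q j) (q j) > 0" using IH m by (intro dot_self_pos_of_triangular[OF indep, of j]) auto
  qed
  have q_p: "\<forall>i<m. in_span N p i (\<lambda>x. q i x - p i x)" using IH by blast
  define c where "c = (\<lambda>i. dot N (p m) (q i) / dot N (q i) (q i))"
  define r where "r = (\<lambda>x. p m x - (\<Sum>i<m. c i * q i x))"
  note step = gram_schmidt_step_span[where p = p and m = m and q = q and c = c and r = r, OF orth pos q_p c_def r_def]
  have p_span: "\<forall>l<m. in_span N q m (p l)" using IH by (auto intro: in_span_mono)
  have eig: "\<forall>j<m. \<forall>x<N. mat_app N A (q j) x = lam j * q j x" using IH by blast
  have eig_r: "\<forall>x<N. mat_app N A r x = lam m * r x"
    using gram_schmidt_step_eigenvector[where p = p and m = m and q = q and c = c and T = T and lam = lam,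
        OF sym _ _ orth pos eig p_span r_def step(1)] tri diag m
    by blast
  show ?case
  proof (intro exI[of _ "q(m := r)"] allI impI)
    fix j assume "j < Suc m"
    then consider "j = m" | "j < m" by linarith
    thus "in_span N p j (\<lambda>x. (q(m := r)) j x - p j x) \<and> in_span N (q(m := r)) (Suc j) (p j)
      \<and> (\<forall>x<N. mat_app N A ((q(m := r)) j) x = lam j * (q(m := r)) j x)
      \<and> (\<forall>i<j. dot N ((q(m := r)) i) ((q(m := r)) j) = 0)"
    proof cases
      case 1
      thus ?thesis using step eig_r by simp
    next
      case 2
      moreover have "in_span N (q(m := r)) (Suc j) (p j)"
        using IH 2 by (auto intro: in_span_cong)
      ultimately show ?thesis using IH by simp
    qed
  qed
qed

lemma dot_orthogonal_expansion:
  fixes q :: "nat \<Rightarrow> nat \<Rightarrow> real" and a lam :: "nat \<Rightarrow> real"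
  assumes orth: "\<forall>j<K. \<forall>i<j. dot N (q i) (q j) = 0"
    and eig: "\<forall>j<K. \<forall>x<N. mat_app N A (q j) x = lam j * q j x"
    and f: "f = (\<lambda>x. \<Sum>j<K. a j * q j x)"
  shows "dot N f f = (\<Sum>j<K. a j * a j * dot N (q j) (q j))"
    and "dot N f (mat_app N A f) = (\<Sum>j<K. lam j * (a j * a j * dot N (q j) (q j)))"
proof -
  have coeff: "dot N (q j) f = a j * dot N (q j) (q j)" if j: "j < K" for j
  proof -
    have "dot N f (q j) = a j * dot N (q j) (q j)"
      unfolding f dot_sum_left by (rule dot_sum_orthogonal[OF orth j])
    thus ?thesis by (simp add: dot_commute)
  qed
  show "dot N f f = (\<Sum>j<K. a j * a j * dot N (q j) (q j))"
  proof -
    have "dot N f f = (\<Sum>j<K. a j * dot N (q j) f)" by (subst (1) f) (rule dot_sum_left)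
    thus ?thesis by (simp add: coeff mult.assoc)
  qed
  have "dot N f (mat_app N A f) = dot N (\<lambda>x. \<Sum>j<K. (a j * lam j) * q j x) f"
    unfolding dot_commute[of N f "mat_app N A f"]
  proof (rule dot_cong)
    fix x assume "x < N"
    thus "mat_app N A f x = (\<Sum>j<K. (a j * lam j) * q j x)"
      using eig by (simp add: f mat_app_sum mult.assoc)
  qed simp
  also have "\<dots> = (\<Sum>j<K. (a j * lam j) * dot N (q j) f)" by (rule dot_sum_left)
  also have "\<dots> = (\<Sum>j<K. lam j * (a j * a j * dot N (q j) (q j)))"
    by (intro sum.cong) (simp_all add: coeff)
  finally show "dot N f (mat_app N A f) = (\<Sum>j<K. lam j * (a j * a j * dot N (q j) (q j)))" .
qed

lemma homogeneous_system_eliminate: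
  fixes g :: "'e \<Rightarrow> 'j \<Rightarrow> real"
  assumes J: "finite J" and j0: "j0 \<in> J" "g e j0 \<noteq> 0"
    and a': "\<forall>v\<in>E. (\<Sum>j\<in>J - {j0}. (g v j - g v j0 * g e j / g e j0) * a' j) = 0"
  defines "s \<equiv> (\<Sum>j\<in>J - {j0}. g e j * a' j)"
  shows "\<forall>v\<in>insert e E. (\<Sum>j\<in>J. g v j * (a'(j0 := - s / g e j0)) j) = 0"
proof -
  have split: "(\<Sum>j\<in>J. g v j * (a'(j0 := - s / g e j0)) j)
      = g v j0 * (- s / g e j0) + (\<Sum>j\<in>J - {j0}. g v j * a' j)" for v
  proof -
    have "(\<Sum>j\<in>J. g v j * (a'(j0 := - s / g e j0)) j)
        = g v j0 * (- s / g e j0) + (\<Sum>j\<in>J - {j0}. g v j * (a'(j0 := - s / g e j0)) j)"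
      using J j0 by (simp add: sum.remove)
    also have "(\<Sum>j\<in>J - {j0}. g v j * (a'(j0 := - s / g e j0)) j) = (\<Sum>j\<in>J - {j0}. g v j * a' j)"
      by (intro sum.cong) auto
    finally show ?thesis .
  qed
  have reduced: "(\<Sum>j\<in>J - {j0}. g v j * a' j) = (g v j0 / g e j0) * s" if v: "v \<in> E" for v
  proof -
    have "0 = (\<Sum>j\<in>J - {j0}. (g v j - g v j0 * g e j / g e j0) * a' j)" using a' v by simp
    also have "\<dots> = (\<Sum>j\<in>J - {j0}. g v j * a' j - (g v j0 / g e j0) * (g e j * a' j))"
      by (intro sum.cong) (auto simp: algebra_simps)
    finally show ?thesis by (simp add: sum_subtractf sum_distrib_left s_def)
  qed
  show ?thesis
  proof
    fix v assume "v \<in> insert e E"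
    thus "(\<Sum>j\<in>J. g v j * (a'(j0 := - s / g e j0)) j) = 0"
      unfolding split using j0 reduced by (auto simp: s_def)
  qed
qed

lemma homogeneous_system_nontrivial_solution:
  fixes g :: "'e \<Rightarrow> 'j \<Rightarrow> real"
  assumes "finite E" and "finite J" and "card E < card J"
  shows "\<exists>a. (\<exists>j\<in>J. a j \<noteq> 0) \<and> (\<forall>v\<in>E. (\<Sum>j\<in>J. g v j * a j) = 0)"
  using assms
proof (induction E arbitrary: J g rule: finite_induct)
  case empty
  then obtain j where "j \<in> J" by fastforce
  thus ?case by (intro exI[of _ "\<lambda>_. 1"]) auto
next
  case (insert e E)
  show ?case
  proof (cases "\<forall>j\<in>J. g e j = 0")
    case True
    have "card E < card J" using insert by simp
    then obtain a where "\<exists>j\<in>J. a j \<noteq> 0" "\<forall>v\<in>E. (\<Sum>j\<in>J. g v j * a j) = 0"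
      using insert.IH[OF insert.prems(1)] by blast
    thus ?thesis using True by (intro exI[of _ a]) auto
  next
    case False
    then obtain j0 where j0: "j0 \<in> J" "g e j0 \<noteq> 0" by blast
    have "finite (J - {j0})" and "card E < card (J - {j0})"
      using insert j0 by (simp_all add: card_Diff_singleton)
    then obtain a' where a': "\<exists>j\<in>J - {j0}. a' j \<noteq> 0"
      "\<forall>v\<in>E. (\<Sum>j\<in>J - {j0}. (g v j - g v j0 * g e j / g e j0) * a' j) = 0"
      using insert.IH[of "J - {j0}" "\<lambda>v j. g v j - g v j0 * g e j / g e j0"] by blast
    define a where "a = a'(j0 := - (\<Sum>j\<in>J - {j0}. g e j * a' j) / g e j0)"
    have "\<exists>j\<in>J. a j \<noteq> 0" using a'(1) by (auto simp: a_def)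
    moreover have "\<forall>v\<in>insert e E. (\<Sum>j\<in>J. g v j * a j) = 0"
      unfolding a_def by (rule homogeneous_system_eliminate[OF insert.prems(1) j0 a'(2)])
    ultimately show ?thesis by blast
  qed
qed

lemma exists_vanishing_rayleigh_le:
  fixes A :: "real mat" and lam :: "real list" and Z :: "nat set"
  assumes A: "A \<in> carrier_mat N N" and sym: "\<forall>x<N. \<forall>y<N. A $$ (x, y) = A $$ (y, x)"
    and cp: "char_poly A = (\<Prod>e\<leftarrow>lam. [:- e, 1:])" and len: "length lam = N" and sorted: "sorted lam"
    and k: "k < N" and Z: "finite Z" "card Z \<le> k"
  obtains f where "dot N f f > 0" and "\<forall>v\<in>Z. f v = 0"
    and "dot N f (mat_app N A f) \<le> lam ! k * dot N f f"
proof -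
  obtain p T where tri: "\<forall>j<N. \<forall>x<N. mat_app N A (p j) x = (\<Sum>l\<le>j. T l j * p l x)"
    and diag: "\<forall>j<N. T j j = lam ! j"
    and indep: "independent_upto N p"
    using schur_triangular_basis[OF A cp] by blast
  obtain q where q: "\<forall>j<N. in_span N p j (\<lambda>x. q j x - p j x) \<and> in_span N q (Suc j) (p j)
      \<and> (\<forall>x<N. mat_app N A (q j) x = lam ! j * q j x) \<and> (\<forall>i<j. dot N (q i) (q j) = 0)"
    using gram_schmidt_eigenvectors[OF sym tri _ indep, of "\<lambda>j. lam ! j" N] diag by auto
  obtain a where a: "\<exists>j\<in>{..k}. a j \<noteq> 0" and vanish: "\<forall>v\<in>Z. (\<Sum>j\<in>{..k}. q j v * a j) = 0"
    using homogeneous_system_nontrivial_solution[OF Z(1), of "{..k}" "\<lambda>v j. q j v"] Z(2) by auto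
  define f where "f = (\<lambda>x. \<Sum>j<Suc k. a j * q j x)"
  have orth: "\<forall>j<Suc k. \<forall>i<j. dot N (q i) (q j) = 0"
    and eig: "\<forall>j<Suc k. \<forall>x<N. mat_app N A (q j) x = lam ! j * q j x"
    using q k by auto
  note expansion = dot_orthogonal_expansion[OF orth eig f_def]
  have "0 < dot N f f"
  proof -
    obtain j0 where j0: "j0 \<le> k" "a j0 \<noteq> 0" using a by auto
    have "dot N (q j0) (q j0) > 0"
      using j0 k q by (intro dot_self_pos_of_triangular[OF indep, of j0]) auto
    hence "a j0 * a j0 * dot N (q j0) (q j0) > 0" using j0(2) by (auto simp: zero_less_mult_iff linorder_neq_iff)
    moreover have "0 \<le> a j * a j * dot N (q j) (q j)" for j using dot_self_nonneg by simp
    ultimately show ?thesis unfolding expansion using j0 by (intro sum_pos2[of _ j0]) auto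
  qed
  moreover have "\<forall>v\<in>Z. f v = 0"
    using vanish by (simp add: f_def lessThan_Suc_atMost mult.commute)
  moreover have "dot N f (mat_app N A f) \<le> lam ! k * dot N f f"
  proof -
    have "lam ! j \<le> lam ! k" if "j < Suc k" for j
      using that sorted len k by (intro sorted_nth_mono) auto
    moreover have "0 \<le> a j * a j * dot N (q j) (q j)" for j using dot_self_nonneg by simp
    ultimately show ?thesis unfolding expansion sum_distrib_left
      by (intro sum_mono mult_right_mono) auto
  qed
  ultimately show ?thesis by (rule that)
qed

lemma square_add_le:
  fixes p q y z :: real
  assumes "p > 0" and "q > 0"
  shows "(y + z)^2 \<le> (p + q) / p * y^2 + (p + q) / q * z^2"
proof -
  have "(p + q) / p * y^2 + (p + q) / q * z^2 - (y + z)^2 = (q * y - p * z)^2 / (p * q)"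
    using assms by (simp add: field_simps power2_eq_square)
  moreover have "0 \<le> (q * y - p * z)^2 / (p * q)" using assms by simp
  ultimately show ?thesis by linarith
qed

lemma square_mean_le_mean_square:
  fixes P y :: "'a \<Rightarrow> real"
  assumes "finite A" and "\<forall>u\<in>A. P u \<ge> 0" and "(\<Sum>u\<in>A. P u) = 1"
  shows "(\<Sum>u\<in>A. P u * y u)^2 \<le> (\<Sum>u\<in>A. P u * (y u)^2)"
proof -
  define m where "m = (\<Sum>u\<in>A. P u * y u)"
  have "0 \<le> (\<Sum>u\<in>A. P u * (y u - m)^2)" using assms(2) by (intro sum_nonneg) auto
  also have "\<dots> = (\<Sum>u\<in>A. P u * (y u)^2 - 2 * m * (P u * y u) + m^2 * P u)"
    by (intro sum.cong) (auto simp: power2_eq_square algebra_simps)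
  also have "\<dots> = (\<Sum>u\<in>A. P u * (y u)^2) - 2 * m * (\<Sum>u\<in>A. P u * y u) + m^2 * (\<Sum>u\<in>A. P u)"
    by (simp add: sum.distrib sum_subtractf sum_distrib_left)
  also have "\<dots> = (\<Sum>u\<in>A. P u * (y u)^2) - m^2"
    using assms(3) by (simp add: m_def power2_eq_square)
  finally show ?thesis by (simp add: m_def)
qed

lemma square_le_split_mean:
  fixes P z :: "'a \<Rightarrow> real"
  assumes A: "finite A" and P: "\<forall>u\<in>A. P u \<ge> 0" "(\<Sum>u\<in>A. P u) = 1" and pq: "p > 0" "q > 0"
  shows "y^2 \<le> (p + q) / p * (\<Sum>u\<in>A. P u * (z u)^2) + (p + q) / q * (\<Sum>u\<in>A. P u * (y - z u)^2)"
proof -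
  have "(\<Sum>u\<in>A. P u * z u) + (\<Sum>u\<in>A. P u * (y - z u)) = (\<Sum>u\<in>A. P u) * y"
    by (simp add: sum.distrib[symmetric] sum_distrib_left sum_distrib_right algebra_simps)
  hence "y = (\<Sum>u\<in>A. P u * z u) + (\<Sum>u\<in>A. P u * (y - z u))"
    using P(2) by simp
  hence "y^2 \<le> (p + q) / p * (\<Sum>u\<in>A. P u * z u)^2 + (p + q) / q * (\<Sum>u\<in>A. P u * (y - z u))^2"
    using square_add_le[OF pq] by metis
  also have "\<dots> \<le> (p + q) / p * (\<Sum>u\<in>A. P u * (z u)^2) + (p + q) / q * (\<Sum>u\<in>A. P u * (y - z u)^2)"
    using pq square_mean_le_mean_square[OF A P] by (intro add_mono mult_left_mono) auto
  finally show ?thesis .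
qed

lemma split_weights_bound:
  fixes s a X Y E L :: real
  assumes s: "s \<ge> 0" and a: "a > 0" and X: "X \<ge> 0" and Y: "Y \<le> 2 * s * X"
    and L: "L \<le> (2 * s + a + a) / (2 * s + a) * Y + (2 * s + a + a) / a * E"
  shows "L \<le> 2 * (s + a) * (X + E / a)"
proof -
  have "(2 * s + a + a) / (2 * s + a) * Y \<le> (2 * s + a + a) / (2 * s + a) * (2 * s * X)"
    using Y s a by (intro mult_left_mono) auto
  also have "\<dots> = 2 * (s + a) * X * (2 * s / (2 * s + a))"
    by (simp add: algebra_simps add_divide_distrib)
  also have "\<dots> \<le> 2 * (s + a) * X"
    using s a X mult_left_mono[of "2 * s / (2 * s + a)" 1 "2 * (s + a) * X"] by simp
  finally have "(2 * s + a + a) / (2 * s + a) * Y \<le> 2 * (s + a) * X" .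
  moreover have "(2 * s + a + a) / a * E = 2 * (s + a) * (E / a)"
    using a by (simp add: algebra_simps add_divide_distrib)
  ultimately have "L \<le> 2 * (s + a) * X + 2 * (s + a) * (E / a)" using L by linarith
  thus ?thesis by (simp add: distrib_left)
qed

lemma sum_adjacent_le_sum_square:
  fixes G :: "nat \<Rightarrow> nat \<Rightarrow> real"
  assumes "\<forall>m\<le>n. \<forall>m'\<le>n. G m m' \<ge> 0"
  shows "(\<Sum>m<n. G m (Suc m) + G (Suc m) m) \<le> (\<Sum>m\<le>n. \<Sum>m'\<le>n. G m m')"
proof -
  define up where "up = (\<lambda>m. (m, Suc m)) ` {..<n}"
  define down where "down = (\<lambda>m. (Suc m, m)) ` {..<n}"
  have "(\<Sum>m<n. G m (Suc m) + G (Suc m) m) = (\<Sum>(m, m')\<in>up. G m m') + (\<Sum>(m, m')\<in>down. G m m')"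
    unfolding up_def down_def by (simp add: sum.distrib sum.reindex inj_on_def)
  also have "\<dots> = (\<Sum>(m, m')\<in>up \<union> down. G m m')"
    by (rule sum.union_disjoint[symmetric]) (auto simp: up_def down_def)
  also have "\<dots> \<le> (\<Sum>(m, m')\<in>{..n} \<times> {..n}. G m m')"
    using assms by (intro sum_mono2) (auto simp: up_def down_def)
  also have "\<dots> = (\<Sum>m\<le>n. \<Sum>m'\<le>n. G m m')"
    by (simp add: sum.cartesian_product)
  finally show ?thesis .
qed

lemma laplacian_quadratic_form:
  fixes w :: "nat \<Rightarrow> nat \<Rightarrow> real" and f :: "nat \<Rightarrow> real"
  assumes sym: "\<forall>u<N. \<forall>v<N. w u v = w v u"
  shows "2 * dot N f (mat_app N (laplacian N w) f) = (\<Sum>x<N. \<Sum>y<N. w x y * (f x - f y)^2)"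
proof -
  have "mat_app N (laplacian N w) f x = (\<Sum>y<N. w x y * (f x - f y))" if x: "x < N" for x
  proof -
    have "mat_app N (laplacian N w) f x = (\<Sum>y<N. (if x = y then (\<Sum>z<N. w x z) * f y else 0) - w x y * f y)"
      unfolding mat_app_def laplacian_def using x by (intro sum.cong) (auto simp: algebra_simps)
    also have "\<dots> = (\<Sum>y<N. w x y) * f x - (\<Sum>y<N. w x y * f y)"
      using x by (simp add: sum_subtractf)
    also have "\<dots> = (\<Sum>y<N. w x y * (f x - f y))"
      by (simp add: right_diff_distrib sum_subtractf sum_distrib_left mult.commute)
    finally show ?thesis .
  qed
  hence first: "dot N f (mat_app N (laplacian N w) f) = (\<Sum>x<N. \<Sum>y<N. w x y * (f x * (f x - f y)))"
    unfolding dot_def by (simp add: sum_distrib_left mult.left_commute)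
  have swapped: "(\<Sum>x<N. \<Sum>y<N. w x y * (f x * (f x - f y))) = (\<Sum>x<N. \<Sum>y<N. w x y * (- f y * (f x - f y)))"
    by (subst sum.swap) (use sym in \<open>auto intro!: sum.cong simp: algebra_simps\<close>)
  have "2 * dot N f (mat_app N (laplacian N w) f)
      = (\<Sum>x<N. \<Sum>y<N. w x y * (f x * (f x - f y))) + (\<Sum>x<N. \<Sum>y<N. w x y * (- f y * (f x - f y)))"
    using first swapped by linarith
  also have "\<dots> = (\<Sum>x<N. \<Sum>y<N. w x y * (f x - f y)^2)"
    by (simp add: sum.distrib[symmetric] power2_eq_square algebra_simps)
  finally show ?thesis .
qed

lemma inverse_le_of_le_mult:
  fixes c l x :: real
  assumes "x \<le> c * l * x" and "0 < x" and "0 \<le> c"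
  shows "inverse c \<le> l"
proof -
  have "1 \<le> c * l" using assms(1,2) by simp
  moreover from this have "c \<noteq> 0" by auto
  ultimately show ?thesis
    using assms(3) by (simp add: inverse_eq_divide divide_le_eq mult.commute)
qed

definition layer_ratio :: "(nat \<Rightarrow> nat \<Rightarrow> real) \<Rightarrow> (nat \<Rightarrow> nat set) \<Rightarrow> nat \<Rightarrow> nat \<Rightarrow> real" where
  "layer_ratio w S i j = (\<Prod>l=i..<j. Dm w S l / Km w S l)"

definition layer_energy ::
    "(nat \<Rightarrow> nat \<Rightarrow> real) \<Rightarrow> (nat \<Rightarrow> nat set) \<Rightarrow> (nat \<Rightarrow> real) \<Rightarrow> nat \<Rightarrow> real" where
  "layer_energy w S f j = (\<Sum>x\<in>S (Suc j). \<Sum>u\<in>S j. w u x * (f x - f u)^2)"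

locale layered_partition =
  fixes N :: nat and w :: "nat \<Rightarrow> nat \<Rightarrow> real" and S :: "nat \<Rightarrow> nat set" and n :: nat
  assumes weighted: "weighted_graph N w" and partition: "is_partition N S n"
    and Km_pos: "\<forall>m<n. Km w S m > 0"
begin

lemma layer_subset: "m \<le> n \<Longrightarrow> S m \<subseteq> {..<N}"
  using partition unfolding is_partition_def by auto

lemma finite_layer: "m \<le> n \<Longrightarrow> finite (S m)"
  using layer_subset finite_subset by blast

lemma layer_vertex: "m \<le> n \<Longrightarrow> x \<in> S m \<Longrightarrow> x < N"
  using layer_subset by blast

lemma weight_nonneg: "u < N \<Longrightarrow> v < N \<Longrightarrow> w u v \<ge> 0"
  using weighted unfolding weighted_graph_def by blast

lemma weight_sym: "u < N \<Longrightarrow> v < N \<Longrightarrow> w u v = w v u"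
  using weighted unfolding weighted_graph_def by blast

lemma Km_le_wA: "j < n \<Longrightarrow> x \<in> S (Suc j) \<Longrightarrow> Km w S j \<le> wA w (S j) x"
  unfolding Km_def by (rule cInf_le_finite) (simp_all add: finite_layer)

lemma wA_le_Dm: "j < n \<Longrightarrow> u \<in> S j \<Longrightarrow> wA w (S (Suc j)) u \<le> Dm w S j"
  unfolding Dm_def by (rule le_cSup_finite) (simp_all add: finite_layer)

lemma Dm_pos:
  assumes j: "j < n" shows "Dm w S j > 0"
proof -
  obtain x where x: "x \<in> S (Suc j)"
    using partition j unfolding is_partition_def by (metis Suc_leI ex_in_conv le_add1 plus_1_eq_Suc)
  have "0 < wA w (S j) x" using Km_le_wA[OF j x] Km_pos j by force
  then obtain u where u: "u \<in> S j" and "w u x > 0"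
    unfolding wA_def by (metis not_le sum_nonpos)
  moreover have "w x u \<le> wA w (S (Suc j)) u"
    unfolding wA_def using x u j layer_vertex[of "Suc j"] layer_vertex[of j] weight_nonneg
    by (intro member_le_sum) (auto intro: finite_layer)
  moreover have "w x u = w u x"
    using weight_sym layer_vertex[of "Suc j" x] layer_vertex[of j u] x u j by simp
  ultimately show ?thesis using wA_le_Dm[OF j u] by linarith
qed

lemma layer_ratio_pos: "j \<le> n \<Longrightarrow> layer_ratio w S i j > 0"
  unfolding layer_ratio_def using Dm_pos Km_pos by (intro prod_pos) auto

lemma layer_energy_nonneg:
  assumes "j < n" shows "layer_energy w S f j \<ge> 0"
  unfolding layer_energy_def
  using assms layer_vertex[of "Suc j"] layer_vertex[of j] weight_nonneg
  by (intro sum_nonneg mult_nonneg_nonneg) auto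

lemma transition_weights:
  assumes j: "j < n" and x: "x \<in> S (Suc j)"
  shows "\<forall>u\<in>S j. 0 \<le> w u x / wA w (S j) x \<and> w u x / wA w (S j) x \<le> w u x / Km w S j"
    and "(\<Sum>u\<in>S j. w u x / wA w (S j) x) = 1"
proof -
  have K: "0 < Km w S j" "Km w S j \<le> wA w (S j) x" using Km_pos Km_le_wA j x by auto
  have "0 \<le> w u x" if "u \<in> S j" for u
    using that j x layer_vertex[of j u] layer_vertex[of "Suc j" x] weight_nonneg by simp
  thus "\<forall>u\<in>S j. 0 \<le> w u x / wA w (S j) x \<and> w u x / wA w (S j) x \<le> w u x / Km w S j"
    using K by (auto intro: divide_left_mono)
  show "(\<Sum>u\<in>S j. w u x / wA w (S j) x) = 1"
    using K by (simp add: sum_divide_distrib[symmetric] wA_def)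
qed

lemma pullback_weight_bounds:
  assumes j: "j < n" and B: "B \<ge> 0" and \<psi>: "\<forall>x\<in>S (Suc j). 0 \<le> \<psi> x \<and> \<psi> x \<le> B"
    and u: "u \<in> S j"
  shows "0 \<le> (\<Sum>x\<in>S (Suc j). \<psi> x * (w u x / wA w (S j) x))"
    and "(\<Sum>x\<in>S (Suc j). \<psi> x * (w u x / wA w (S j) x)) \<le> B * Dm w S j / Km w S j"
proof -
  note P = transition_weights(1)[OF j]
  show "0 \<le> (\<Sum>x\<in>S (Suc j). \<psi> x * (w u x / wA w (S j) x))"
    using \<psi> P u by (intro sum_nonneg mult_nonneg_nonneg) auto
  have "(\<Sum>x\<in>S (Suc j). \<psi> x * (w u x / wA w (S j) x)) \<le> (\<Sum>x\<in>S (Suc j). B * (w u x / Km w S j))"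
    using \<psi> P u B by (intro sum_mono mult_mono) auto
  also have "\<dots> = B / Km w S j * wA w (S (Suc j)) u"
    unfolding wA_def sum_distrib_left
    using weight_sym layer_vertex[of j u] layer_vertex[of "Suc j"] u j by (intro sum.cong) auto
  also have "\<dots> \<le> B / Km w S j * Dm w S j"
    using wA_le_Dm[OF j u] B Km_pos j by (intro mult_left_mono) auto
  finally show "(\<Sum>x\<in>S (Suc j). \<psi> x * (w u x / wA w (S j) x)) \<le> B * Dm w S j / Km w S j"
    by simp
qed

lemma layer_transfer:
  assumes j: "j < n" and B: "B \<ge> 0" and \<psi>: "\<forall>x\<in>S (Suc j). 0 \<le> \<psi> x \<and> \<psi> x \<le> B"
    and pq: "p > 0" "q > 0"
  obtains \<psi>' where "\<forall>u\<in>S j. 0 \<le> \<psi>' u \<and> \<psi>' u \<le> B * Dm w S j / Km w S j"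
    and "(\<Sum>x\<in>S (Suc j). \<psi> x * (f x)^2)
      \<le> (p + q) / p * (\<Sum>u\<in>S j. \<psi>' u * (f u)^2) + (p + q) / q * (B / Km w S j * layer_energy w S f j)"
proof
  define P where "P = (\<lambda>u x. w u x / wA w (S j) x)"
  define K where "K = Km w S j"
  have P_bounds: "\<And>x. x \<in> S (Suc j) \<Longrightarrow> \<forall>u\<in>S j. 0 \<le> P u x \<and> P u x \<le> w u x / K"
    and P_sum: "\<And>x. x \<in> S (Suc j) \<Longrightarrow> (\<Sum>u\<in>S j. P u x) = 1"
    using transition_weights[OF j] by (simp_all add: P_def K_def)
  have fin: "finite (S j)" "finite (S (Suc j))" using j finite_layer by auto
  have "(\<Sum>x\<in>S (Suc j). \<psi> x * (f x)^2)
      \<le> (\<Sum>x\<in>S (Suc j). \<psi> x * ((p + q) / p * (\<Sum>u\<in>S j. P u x * (f u)^2)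
                              + (p + q) / q * (\<Sum>u\<in>S j. P u x * (f x - f u)^2)))"
    using \<psi> P_bounds P_sum fin pq
    by (intro sum_mono mult_left_mono square_le_split_mean) auto
  also have "\<dots> = (p + q) / p * (\<Sum>x\<in>S (Suc j). \<psi> x * (\<Sum>u\<in>S j. P u x * (f u)^2))
                + (p + q) / q * (\<Sum>x\<in>S (Suc j). \<psi> x * (\<Sum>u\<in>S j. P u x * (f x - f u)^2))"
    by (simp add: sum.distrib distrib_left sum_distrib_left mult.left_commute)
  also have "(\<Sum>x\<in>S (Suc j). \<psi> x * (\<Sum>u\<in>S j. P u x * (f u)^2))
      = (\<Sum>u\<in>S j. (\<Sum>x\<in>S (Suc j). \<psi> x * P u x) * (f u)^2)"
    by (simp add: sum_distrib_left sum_distrib_right mult.assoc sum.swap[of _ "S j"])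
  finally have split: "(\<Sum>x\<in>S (Suc j). \<psi> x * (f x)^2)
      \<le> (p + q) / p * (\<Sum>u\<in>S j. (\<Sum>x\<in>S (Suc j). \<psi> x * P u x) * (f u)^2)
        + (p + q) / q * (\<Sum>x\<in>S (Suc j). \<psi> x * (\<Sum>u\<in>S j. P u x * (f x - f u)^2))" .
  have "(\<Sum>x\<in>S (Suc j). \<psi> x * (\<Sum>u\<in>S j. P u x * (f x - f u)^2))
      \<le> (\<Sum>x\<in>S (Suc j). B * (\<Sum>u\<in>S j. w u x / K * (f x - f u)^2))"
    using \<psi> P_bounds B
    by (intro sum_mono mult_mono) (auto intro!: sum_mono mult_right_mono sum_nonneg intro: order_trans)
  also have "\<dots> = B / K * layer_energy w S f j"
    unfolding layer_energy_def sum_distrib_left by (intro sum.cong) (auto simp: algebra_simps)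
  finally have "(p + q) / q * (\<Sum>x\<in>S (Suc j). \<psi> x * (\<Sum>u\<in>S j. P u x * (f x - f u)^2))
      \<le> (p + q) / q * (B / K * layer_energy w S f j)"
    using pq by (intro mult_left_mono) auto
  with split show "(\<Sum>x\<in>S (Suc j). \<psi> x * (f x)^2)
      \<le> (p + q) / p * (\<Sum>u\<in>S j. (\<Sum>x\<in>S (Suc j). \<psi> x * P u x) * (f u)^2)
        + (p + q) / q * (B / Km w S j * layer_energy w S f j)"
    by (simp add: K_def)
  show "\<forall>u\<in>S j. 0 \<le> (\<Sum>x\<in>S (Suc j). \<psi> x * P u x) \<and> (\<Sum>x\<in>S (Suc j). \<psi> x * P u x) \<le> B * Dm w S j / Km w S j"
    using pullback_weight_bounds[OF j B \<psi>] by (simp add: P_def)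
qed

lemma hardy_layer:
  fixes \<alpha> f :: "nat \<Rightarrow> real"
  assumes \<alpha>: "\<forall>i. 1 \<le> i \<and> i \<le> n \<longrightarrow> \<alpha> i > 0" and f0: "\<forall>v\<in>S 0. f v = 0"
  shows "j \<le> n \<Longrightarrow> B \<ge> 0 \<Longrightarrow> \<forall>x\<in>S j. 0 \<le> \<psi> x \<and> \<psi> x \<le> B \<Longrightarrow>
     (\<Sum>x\<in>S j. \<psi> x * (f x)^2) \<le> 2 * (\<Sum>i=1..j. \<alpha> i) *
       (\<Sum>i=1..j. B * layer_ratio w S i j / Km w S (i - 1) * layer_energy w S f (i - 1) / \<alpha> i)"
proof (induction j arbitrary: \<psi> B)
  case 0
  show ?case using f0 by simp
next
  case (Suc j)
  note B = Suc.prems(2) and \<psi> = Suc.prems(3)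
  have j: "j < n" using Suc.prems(1) by simp
  define s where "s = (\<Sum>i=1..j. \<alpha> i)"
  define a where "a = \<alpha> (Suc j)"
  define K where "K = Km w S j"
  define X where "X = (\<Sum>i=1..j. B * layer_ratio w S i (Suc j) / Km w S (i - 1) * layer_energy w S f (i - 1) / \<alpha> i)"
  have a: "a > 0" using \<alpha> j by (simp add: a_def)
  have s: "s \<ge> 0" unfolding s_def using \<alpha> j by (intro sum_nonneg) (auto intro: less_imp_le)
  have K: "K > 0" using Km_pos j by (simp add: K_def)
  have X: "X \<ge> 0" unfolding X_def
    using B \<alpha> j Km_pos layer_ratio_pos[of "Suc j", THEN less_imp_le] layer_energy_nonneg[of _ f]
    by (intro sum_nonneg divide_nonneg_pos mult_nonneg_nonneg) auto
  txt \<open>Split \<open>f x\<close> between the previous layer and the edges to it in the ratio \<open>2 s + a : a\<close>.\<close>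
  obtain \<psi>' where \<psi>': "\<forall>u\<in>S j. 0 \<le> \<psi>' u \<and> \<psi>' u \<le> B * Dm w S j / K"
    and transfer: "(\<Sum>x\<in>S (Suc j). \<psi> x * (f x)^2)
      \<le> (2 * s + a + a) / (2 * s + a) * (\<Sum>u\<in>S j. \<psi>' u * (f u)^2)
        + (2 * s + a + a) / a * (B / K * layer_energy w S f j)"
    using layer_transfer[OF j B \<psi>, of "2 * s + a" a f] s a by (auto simp: K_def)
  have "(\<Sum>u\<in>S j. \<psi>' u * (f u)^2) \<le> 2 * s *
      (\<Sum>i=1..j. B * Dm w S j / K * layer_ratio w S i j / Km w S (i - 1) * layer_energy w S f (i - 1) / \<alpha> i)"
    unfolding s_def using \<psi>' B Dm_pos[OF j] K
    by (intro Suc.IH[OF less_imp_le[OF j], where \<psi> = \<psi>' and B = "B * Dm w S j / K"]) auto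
  also have "(\<Sum>i=1..j. B * Dm w S j / K * layer_ratio w S i j / Km w S (i - 1) * layer_energy w S f (i - 1) / \<alpha> i) = X"
    unfolding X_def K_def layer_ratio_def by (intro sum.cong) (auto simp: prod.atLeastLessThan_Suc)
  finally have IH: "(\<Sum>u\<in>S j. \<psi>' u * (f u)^2) \<le> 2 * s * X" .
  have "(\<Sum>x\<in>S (Suc j). \<psi> x * (f x)^2) \<le> 2 * (s + a) * (X + B / K * layer_energy w S f j / a)"
    using split_weights_bound[OF s a X IH transfer] by simp
  also have "\<dots> = 2 * (\<Sum>i=1..Suc j. \<alpha> i) *
      (\<Sum>i=1..Suc j. B * layer_ratio w S i (Suc j) / Km w S (i - 1) * layer_energy w S f (i - 1) / \<alpha> i)"
    by (simp add: s_def a_def K_def X_def layer_ratio_def mult.assoc)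
  finally show ?case .
qed

lemma sum_over_layers: "(\<Sum>v<N. h v) = (\<Sum>m\<le>n. \<Sum>x\<in>S m. h x)"
proof -
  have "{..<N} = (\<Union>m\<le>n. S m)" using partition unfolding is_partition_def by auto
  moreover have "(\<Sum>v\<in>(\<Union>m\<le>n. S m). h v) = (\<Sum>m\<le>n. \<Sum>x\<in>S m. h x)"
    using partition finite_layer by (intro sum.UNION_disjoint) (auto simp: is_partition_def)
  ultimately show ?thesis by simp
qed

lemma layer_energy_sum_le:
  "2 * (\<Sum>j<n. layer_energy w S f j) \<le> (\<Sum>x<N. \<Sum>y<N. w x y * (f x - f y)^2)"
proof -
  define G where "G = (\<lambda>m m'. \<Sum>x\<in>S m. \<Sum>y\<in>S m'. w x y * (f x - f y)^2)"
  have "G j (Suc j) + G (Suc j) j = 2 * layer_energy w S f j" if j: "j < n" for j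
  proof -
    have "G j (Suc j) = layer_energy w S f j"
      unfolding layer_energy_def G_def by (subst sum.swap) (simp add: power2_commute)
    moreover have "G (Suc j) j = layer_energy w S f j"
      unfolding layer_energy_def G_def
      using j layer_vertex[of j] layer_vertex[of "Suc j"] weight_sym by (intro sum.cong) auto
    ultimately show ?thesis by simp
  qed
  hence "2 * (\<Sum>j<n. layer_energy w S f j) = (\<Sum>j<n. G j (Suc j) + G (Suc j) j)"
    by (simp add: sum_distrib_left)
  also have "\<dots> \<le> (\<Sum>m\<le>n. \<Sum>m'\<le>n. G m m')"
    unfolding G_def using layer_vertex weight_nonneg
    by (intro sum_adjacent_le_sum_square) (auto intro!: sum_nonneg)
  also have "\<dots> = (\<Sum>m\<le>n. \<Sum>x\<in>S m. \<Sum>m'\<le>n. \<Sum>y\<in>S m'. w x y * (f x - f y)^2)"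
    unfolding G_def by (intro sum.cong refl sum.swap)
  also have "\<dots> = (\<Sum>x<N. \<Sum>y<N. w x y * (f x - f y)^2)"
    by (simp only: sum_over_layers)
  finally show ?thesis .
qed

lemma layer_square_sum_le:
  fixes f :: "nat \<Rightarrow> real"
  assumes f0: "\<forall>v\<in>S 0. f v = 0" and M: "M \<le> n"
  shows "(\<Sum>x\<in>S M. (f x)^2)
    \<le> 2 * (\<Sum>i=1..M. layer_ratio w S i M / Km w S (i - 1)) * (\<Sum>j<n. layer_energy w S f j)"
proof -
  define \<alpha> where "\<alpha> = (\<lambda>i. layer_ratio w S i M / Km w S (i - 1))"
  have \<alpha>: "\<forall>i. 1 \<le> i \<and> i \<le> n \<longrightarrow> \<alpha> i > 0"
    unfolding \<alpha>_def using layer_ratio_pos[OF M] Km_pos by (auto intro!: divide_pos_pos)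
  have "(\<Sum>x\<in>S M. 1 * (f x)^2)
      \<le> 2 * (\<Sum>i=1..M. \<alpha> i) * (\<Sum>i=1..M. 1 * layer_ratio w S i M / Km w S (i - 1) * layer_energy w S f (i - 1) / \<alpha> i)"
    by (rule hardy_layer[OF \<alpha> f0 M, where \<psi> = "\<lambda>_. 1" and B = 1]) auto
  also have "(\<Sum>i=1..M. 1 * layer_ratio w S i M / Km w S (i - 1) * layer_energy w S f (i - 1) / \<alpha> i)
      = (\<Sum>i=1..M. layer_energy w S f (i - 1))"
  proof (intro sum.cong refl)
    fix i assume "i \<in> {1..M}"
    hence "\<alpha> i > 0" using \<alpha> M by auto
    moreover have "1 * layer_ratio w S i M / Km w S (i - 1) = \<alpha> i" by (simp add: \<alpha>_def)
    ultimately show "1 * layer_ratio w S i M / Km w S (i - 1) * layer_energy w S f (i - 1) / \<alpha> i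
        = layer_energy w S f (i - 1)"
      by simp
  qed
  also have "\<dots> = (\<Sum>j<M. layer_energy w S f j)"
    by (simp add: sum.atLeast1_atMost_eq)
  finally have "(\<Sum>x\<in>S M. (f x)^2) \<le> 2 * (\<Sum>i=1..M. \<alpha> i) * (\<Sum>j<M. layer_energy w S f j)"
    by simp
  also have "\<dots> \<le> 2 * (\<Sum>i=1..M. \<alpha> i) * (\<Sum>j<n. layer_energy w S f j)"
    using M \<alpha> layer_energy_nonneg
    by (intro mult_left_mono sum_mono2 mult_nonneg_nonneg sum_nonneg) (auto intro: less_imp_le)
  finally show ?thesis by (simp add: \<alpha>_def)
qed

lemma delta2_squared:
  "(delta2 w S n)^2 = (\<Sum>m=1..n. \<Sum>i=1..m. layer_ratio w S i m / Km w S (i - 1))"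
proof -
  have "0 \<le> (\<Sum>m=1..n. \<Sum>i=1..m. layer_ratio w S i m / Km w S (i - 1))"
    using layer_ratio_pos Km_pos by (intro sum_nonneg divide_nonneg_pos) (auto intro: less_imp_le)
  thus ?thesis unfolding delta2_def layer_ratio_def by simp
qed

lemma hardy_inequality:
  fixes f :: "nat \<Rightarrow> real"
  assumes f0: "\<forall>v\<in>S 0. f v = 0"
  shows "dot N f f \<le> 2 * (delta2 w S n)^2 * (\<Sum>j<n. layer_energy w S f j)"
proof -
  have "dot N f f = (\<Sum>m\<le>n. \<Sum>x\<in>S m. (f x)^2)"
    unfolding dot_def sum_over_layers by (simp add: power2_eq_square)
  also have "\<dots> = (\<Sum>m=1..n. \<Sum>x\<in>S m. (f x)^2)"
    using f0 by (simp add: atMost_atLeast0 sum.atLeast_Suc_atMost)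
  also have "\<dots> \<le> (\<Sum>m=1..n. 2 * (\<Sum>i=1..m. layer_ratio w S i m / Km w S (i - 1)) * (\<Sum>j<n. layer_energy w S f j))"
    using layer_square_sum_le[OF f0] by (intro sum_mono) auto
  also have "\<dots> = 2 * (delta2 w S n)^2 * (\<Sum>j<n. layer_energy w S f j)"
    by (simp only: delta2_squared sum_distrib_right[symmetric] sum_distrib_left[symmetric])
  finally show ?thesis .
qed

end

theorem corollary3p5:
  fixes N :: nat and w :: "nat \<Rightarrow> nat \<Rightarrow> real" and lam :: "real list"
    and k n :: nat and S :: "nat \<Rightarrow> nat set"
  assumes "weighted_graph N w" and "connected_wg N w"
    and "length lam = N" and "sorted lam"
    and "char_poly (laplacian N w) = (\<Prod>a\<leftarrow>lam. [:- a, 1:])"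
    and "k < N"
    and "card (S 0) \<le> k"
    and "is_partition N S n"
    and "\<forall>m<n. Km w S m > 0"
  shows "lam ! k \<ge> inverse (2 * (delta2 w S n)\<^sup>2)"
proof -
  interpret layered_partition N w S n using assms(1,8,9) by unfold_locales
  define L where "L = laplacian N w"
  define c where "c = 2 * (delta2 w S n)\<^sup>2"
  have L_sym: "\<forall>x<N. \<forall>y<N. L $$ (x, y) = L $$ (y, x)"
    using weight_sym by (auto simp: L_def laplacian_def)
  obtain f where f_pos: "dot N f f > 0" and f0: "\<forall>v\<in>S 0. f v = 0"
    and rayleigh: "dot N f (mat_app N L f) \<le> lam ! k * dot N f f"
    using exists_vanishing_rayleigh_le[OF _ L_sym _ assms(3,4,6) finite_layer assms(7)] assms(5)
    by (auto simp: L_def laplacian_def)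
  have "dot N f f \<le> c * (\<Sum>j<n. layer_energy w S f j)"
    unfolding c_def by (rule hardy_inequality[OF f0])
  also have "\<dots> \<le> c * dot N f (mat_app N L f)"
    using layer_energy_sum_le[of f] laplacian_quadratic_form[of N w f] weight_sym
    by (intro mult_left_mono) (auto simp: L_def c_def)
  also have "\<dots> \<le> c * lam ! k * dot N f f"
    using rayleigh by (simp add: c_def mult.assoc mult_left_mono)
  finally show ?thesis
    unfolding c_def[symmetric] using f_pos by (rule inverse_le_of_le_mult) (simp add: c_def)
qed

end
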